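(* Let $\delta$ satisfy the Kalmanson conditions with respect to $\pi=(x_1,\dots,x_n)$, let $C_1,\dots,C_m$ ($m\ge4$) be a partition of $X$ into consecutive intervals of $\pi$ in this order, and let $\mu$ be a block weighting. Then for every $1\le i$ with $i+3\le m$, \[Q_\delta(C_i,C_{i+3})-Q_\delta(C_{i+1},C_{i+2})\ge0.\]
   Context: $X=\{1,\dots,n\}$. A dissimilarity map is $\delta:X\times X\to\mathbb{R}$ with $\delta(i,j)=\delta(j,i)\ge0$, $\delta(i,i)=0$. A circular ordering is a listing $\pi=(x_1,\dots,x_n)$ of $X$ regarded cyclically. $\delta$ satisfies the Kalmanson conditions with respect to $\pi$ if for all $1\le i<j<k<l\le n$: $\delta(x_i,x_j)+\delta(x_k,x_l)\le\delta(x_i,x_k)+\delta(x_j,x_l)$ and $\delta(x_i,x_l)+\delta(x_j,x_k)\le\delta(x_i,x_k)+\delta(x_j,x_l)$. The partition into consecutive intervals means $C_1=\{x_1,\dots,x_{a_1}\}$, $C_2=\{x_{a_1+1},\dots,x_{a_2}\},\dots,C_m=\{x_{a_{m-1}+1},\dots,x_n\}$. A block weighting is $\mu:X\to\mathbb{R}_{\ge0}$ with $\sum_{x\in C_r}\mu(x)=1$ for every $r$. Set $\delta(C_r,C_s)=\sum_{x\in C_r,y\in C_s}\mu(x)\mu(y)\delta(x,y)$ and $Q_\delta(C_r,C_s)=(m-2)\delta(C_r,C_s)-\sum_{t\ne r}\delta(C_r,C_t)-\sum_{t\ne s}\delta(C_s,C_t)$. *)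

theory Defs
  imports Main "HOL.Real"
begin

definition dissimilarity :: "nat \<Rightarrow> (nat \<Rightarrow> nat \<Rightarrow> real) \<Rightarrow> bool" where
  "dissimilarity n \<delta> \<longleftrightarrow>
     (\<forall>i\<in>{1..n}. \<forall>j\<in>{1..n}. \<delta> i j = \<delta> j i \<and> \<delta> i j \<ge> 0) \<and>
     (\<forall>i\<in>{1..n}. \<delta> i i = 0)"

text \<open>A circular ordering (x_1,...,x_n) of X is given by the bijection p with p k = x_k.\<close>
definition circular_ordering :: "nat \<Rightarrow> (nat \<Rightarrow> nat) \<Rightarrow> bool" where
  "circular_ordering n p \<longleftrightarrow> bij_betw p {1..n} {1..n}"

definition kalmanson :: "nat \<Rightarrow> (nat \<Rightarrow> nat \<Rightarrow> real) \<Rightarrow> (nat \<Rightarrow> nat) \<Rightarrow> bool" where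
  "kalmanson n \<delta> p \<longleftrightarrow>
     (\<forall>i j k l. 1 \<le> i \<and> i < j \<and> j < k \<and> k < l \<and> l \<le> n \<longrightarrow>
        \<delta> (p i) (p j) + \<delta> (p k) (p l) \<le> \<delta> (p i) (p k) + \<delta> (p j) (p l) \<and>
        \<delta> (p i) (p l) + \<delta> (p j) (p k) \<le> \<delta> (p i) (p k) + \<delta> (p j) (p l))"

text \<open>Consecutive-interval partition into m blocks with boundaries a 0 = 0 < a 1 < ... < a m = n;
  block r (1 \<le> r \<le> m) is {x_{a(r-1)+1}, ..., x_{a r}}.\<close>
definition interval_partition :: "nat \<Rightarrow> nat \<Rightarrow> (nat \<Rightarrow> nat) \<Rightarrow> bool" where
  "interval_partition n m a \<longleftrightarrow> a 0 = 0 \<and> a m = n \<and> (\<forall>r<m. a r < a (Suc r))"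

definition block :: "(nat \<Rightarrow> nat) \<Rightarrow> (nat \<Rightarrow> nat) \<Rightarrow> nat \<Rightarrow> nat set" where
  "block p a r = p ` {a (r - 1) + 1 .. a r}"

definition block_weighting ::
  "nat \<Rightarrow> nat \<Rightarrow> (nat \<Rightarrow> nat) \<Rightarrow> (nat \<Rightarrow> nat) \<Rightarrow> (nat \<Rightarrow> real) \<Rightarrow> bool" where
  "block_weighting n m p a \<mu> \<longleftrightarrow>
     (\<forall>x\<in>{1..n}. \<mu> x \<ge> 0) \<and> (\<forall>r\<in>{1..m}. (\<Sum>x\<in>block p a r. \<mu> x) = 1)"

definition block_dist ::
  "(nat \<Rightarrow> nat \<Rightarrow> real) \<Rightarrow> (nat \<Rightarrow> real) \<Rightarrow> nat set \<Rightarrow> nat set \<Rightarrow> real" where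
  "block_dist \<delta> \<mu> C D = (\<Sum>x\<in>C. \<Sum>y\<in>D. \<mu> x * \<mu> y * \<delta> x y)"

definition Qdelta ::
  "nat \<Rightarrow> (nat \<Rightarrow> nat \<Rightarrow> real) \<Rightarrow> (nat \<Rightarrow> real) \<Rightarrow> (nat \<Rightarrow> nat) \<Rightarrow> (nat \<Rightarrow> nat) \<Rightarrow> nat \<Rightarrow> nat \<Rightarrow> real" where
  "Qdelta m \<delta> \<mu> p a r s =
     (real m - 2) * block_dist \<delta> \<mu> (block p a r) (block p a s)
     - (\<Sum>t\<in>{1..m} - {r}. block_dist \<delta> \<mu> (block p a r) (block p a t))
     - (\<Sum>t\<in>{1..m} - {s}. block_dist \<delta> \<mu> (block p a s) (block p a t))"

end

theory Submission
  imports Defs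
begin

text \<open>Averaging the two Kalmanson inequalities against the block weights shows that the
  dissimilarity \<open>G r s = \<delta>(C\<^sub>r, C\<^sub>s)\<close> induced on the blocks is again Kalmanson, now for the
  order \<open>C\<^sub>1, \<dots>, C\<^sub>m\<close>. For any symmetric \<open>G\<close> the mutual contributions of \<open>C\<^sub>i, \<dots>, C\<^sub>i\<^sub>+\<^sub>3\<close>
  cancel in \<open>Q(C\<^sub>i, C\<^sub>i\<^sub>+\<^sub>3) - Q(C\<^sub>i\<^sub>+\<^sub>1, C\<^sub>i\<^sub>+\<^sub>2)\<close>, leaving a sum over the other blocks \<open>C\<^sub>t\<close> of
  \<open>G i (i+3) - G (i+1) (i+2) + G (i+1) t + G (i+2) t - G i t - G (i+3) t\<close>. Whether \<open>C\<^sub>t\<close> lies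
  before or after the four blocks, each such term is the sum of two Kalmanson inequalities
  for \<open>G\<close>.\<close>

lemma weighted_average_mono:
  fixes \<mu> g h :: "'a \<Rightarrow> real"
  assumes "sum \<mu> W = 1" "\<And>w. w \<in> W \<Longrightarrow> 0 \<le> \<mu> w" "\<And>w. w \<in> W \<Longrightarrow> c + g w \<le> c' + h w"
  shows "c + (\<Sum>w\<in>W. \<mu> w * g w) \<le> c' + (\<Sum>w\<in>W. \<mu> w * h w)"
proof -
  have "(\<Sum>w\<in>W. \<mu> w * (c + g w)) \<le> (\<Sum>w\<in>W. \<mu> w * (c' + h w))"
    using assms(2,3) by (intro sum_mono mult_left_mono)
  then show ?thesis
    by (simp add: distrib_left sum.distrib assms(1) flip: sum_distrib_right)
qed

lemma block_dist_altdef: "block_dist \<delta> \<mu> A B = (\<Sum>x\<in>A. \<mu> x * (\<Sum>y\<in>B. \<mu> y * \<delta> x y))"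
  by (simp add: block_dist_def sum_distrib_left mult.assoc)

lemma block_dist_commute:
  assumes "\<And>x y. x \<in> A \<Longrightarrow> y \<in> B \<Longrightarrow> \<delta> x y = \<delta> y x"
  shows "block_dist \<delta> \<mu> A B = block_dist \<delta> \<mu> B A"
  unfolding block_dist_def using assms
  by (subst sum.swap) (auto intro!: sum.cong simp: mult.commute)

lemma block_dist_four_point:
  assumes sums: "sum \<mu> A = 1" "sum \<mu> B = 1" "sum \<mu> C = 1" "sum \<mu> E = 1"
    and nonneg: "\<And>x. x \<in> A \<union> B \<union> C \<union> E \<Longrightarrow> 0 \<le> \<mu> x"
    and four_point: "\<And>x y z w. x \<in> A \<Longrightarrow> y \<in> B \<Longrightarrow> z \<in> C \<Longrightarrow> w \<in> E \<Longrightarrow>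
      \<delta> x y + \<delta> z w \<le> \<delta> x z + \<delta> y w"
  shows "block_dist \<delta> \<mu> A B + block_dist \<delta> \<mu> C E \<le> block_dist \<delta> \<mu> A C + block_dist \<delta> \<mu> B E"
proof -
  have avg_w: "\<delta> x y + (\<Sum>w\<in>E. \<mu> w * \<delta> z w) \<le> \<delta> x z + (\<Sum>w\<in>E. \<mu> w * \<delta> y w)"
    if "x \<in> A" "y \<in> B" "z \<in> C" for x y z
    using that by (intro weighted_average_mono sums nonneg four_point) auto
  have avg_z: "\<delta> x y + block_dist \<delta> \<mu> C E \<le> (\<Sum>w\<in>E. \<mu> w * \<delta> y w) + (\<Sum>z\<in>C. \<mu> z * \<delta> x z)"
    if "x \<in> A" "y \<in> B" for x y
    unfolding block_dist_altdef
    by (intro weighted_average_mono sums nonneg) (auto dest: avg_w[OF that])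
  have avg_y: "block_dist \<delta> \<mu> C E + (\<Sum>y\<in>B. \<mu> y * \<delta> x y)
      \<le> (\<Sum>z\<in>C. \<mu> z * \<delta> x z) + block_dist \<delta> \<mu> B E"
    if "x \<in> A" for x
    unfolding block_dist_altdef[of _ _ B E]
    by (intro weighted_average_mono sums nonneg) (auto dest: avg_z[OF that])
  have "block_dist \<delta> \<mu> C E + block_dist \<delta> \<mu> A B \<le> block_dist \<delta> \<mu> B E + block_dist \<delta> \<mu> A C"
    unfolding block_dist_altdef[of _ _ A]
    by (intro weighted_average_mono sums nonneg) (auto dest: avg_y)
  then show ?thesis by simp
qed

lemma interval_partition_mono:
  assumes "interval_partition n m a" "r \<le> s" "s \<le> m"
  shows "a r \<le> a s"
proof (rule lift_Suc_mono_le_ivl[where f = a and N = "{..<m}"])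
  show "a k \<le> a (Suc k)" if "k \<in> {..<m}" for k
    using assms(1) that unfolding interval_partition_def by (simp add: less_imp_le)
qed (use assms(2,3) in auto)

lemma interval_partition_index_bounds:
  assumes "interval_partition n m a" "r \<in> {1..m}" "k \<in> {a (r - 1) + 1 .. a r}"
  shows "k \<in> {1..n}"
proof -
  have "a r \<le> a m"
    using assms(2) by (intro interval_partition_mono[OF assms(1)]) auto
  then show ?thesis
    using assms(1,3) unfolding interval_partition_def by auto
qed

lemma interval_partition_index_less:
  assumes "interval_partition n m a" "r < s" "s \<le> m"
    and "k \<in> {a (r - 1) + 1 .. a r}" "l \<in> {a (s - 1) + 1 .. a s}"
  shows "k < l"
proof -
  have "a r \<le> a (s - 1)"
    using assms(2,3) by (intro interval_partition_mono[OF assms(1)]) auto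
  then show ?thesis using assms(2,4,5) by auto
qed

lemma block_subset:
  assumes "circular_ordering n p" "interval_partition n m a" "r \<in> {1..m}"
  shows "block p a r \<subseteq> {1..n}"
  using assms interval_partition_index_bounds[OF assms(2,3)]
  by (auto simp: block_def circular_ordering_def bij_betw_def)

definition block_dissimilarity ::
  "(nat \<Rightarrow> nat \<Rightarrow> real) \<Rightarrow> (nat \<Rightarrow> real) \<Rightarrow> (nat \<Rightarrow> nat) \<Rightarrow> (nat \<Rightarrow> nat) \<Rightarrow> nat \<Rightarrow> nat \<Rightarrow> real"
  where "block_dissimilarity \<delta> \<mu> p a r s = block_dist \<delta> \<mu> (block p a r) (block p a s)"

lemma block_dissimilarity_commute:
  assumes "dissimilarity n \<delta>" "circular_ordering n p" "interval_partition n m a"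
    and "r \<in> {1..m}" "s \<in> {1..m}"
  shows "block_dissimilarity \<delta> \<mu> p a r s = block_dissimilarity \<delta> \<mu> p a s r"
  unfolding block_dissimilarity_def
  using assms block_subset[OF assms(2,3)]
  by (intro block_dist_commute) (auto simp: dissimilarity_def subset_iff)

lemma kalmanson_block_points:
  assumes "kalmanson n \<delta> p" "interval_partition n m a"
    and "1 \<le> r1" "r1 < r2" "r2 < r3" "r3 < r4" "r4 \<le> m"
    and "x1 \<in> block p a r1" "x2 \<in> block p a r2" "x3 \<in> block p a r3" "x4 \<in> block p a r4"
  shows "\<delta> x1 x2 + \<delta> x3 x4 \<le> \<delta> x1 x3 + \<delta> x2 x4 \<and> \<delta> x1 x4 + \<delta> x2 x3 \<le> \<delta> x1 x3 + \<delta> x2 x4"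
proof -
  obtain k1 k2 k3 k4 where
    k: "k1 \<in> {a (r1 - 1) + 1 .. a r1}" "k2 \<in> {a (r2 - 1) + 1 .. a r2}"
       "k3 \<in> {a (r3 - 1) + 1 .. a r3}" "k4 \<in> {a (r4 - 1) + 1 .. a r4}"
    and x: "x1 = p k1" "x2 = p k2" "x3 = p k3" "x4 = p k4"
    using assms(8-11) unfolding block_def by blast
  have "1 \<le> k1" "k4 \<le> n"
    using interval_partition_index_bounds[OF assms(2) _ k(1)]
      interval_partition_index_bounds[OF assms(2) _ k(4)] assms(3-7) by auto
  moreover have "k1 < k2" "k2 < k3" "k3 < k4"
    using interval_partition_index_less[OF assms(2) _ _ k(1) k(2)]
      interval_partition_index_less[OF assms(2) _ _ k(2) k(3)]
      interval_partition_index_less[OF assms(2) _ _ k(3) k(4)] assms(3-7) by auto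
  ultimately show ?thesis
    using assms(1)[unfolded kalmanson_def, rule_format, of k1 k2 k3 k4] unfolding x by simp
qed

lemma kalmanson_block_dissimilarity:
  assumes "dissimilarity n \<delta>" "circular_ordering n p" "kalmanson n \<delta> p"
    and "interval_partition n m a" "block_weighting n m p a \<mu>"
  shows "kalmanson m (block_dissimilarity \<delta> \<mu> p a) id"
  unfolding kalmanson_def id_apply
proof (intro allI impI conjI)
  fix r1 r2 r3 r4 :: nat
  assume r: "1 \<le> r1 \<and> r1 < r2 \<and> r2 < r3 \<and> r3 < r4 \<and> r4 \<le> m"
  then have mem: "r1 \<in> {1..m}" "r2 \<in> {1..m}" "r3 \<in> {1..m}" "r4 \<in> {1..m}" by auto
  let ?B = "block p a"
  let ?D = "block_dissimilarity \<delta> \<mu> p a"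
  have sums: "sum \<mu> (?B r) = 1" if "r \<in> {1..m}" for r
    using assms(5) that unfolding block_weighting_def by blast
  have nonneg: "0 \<le> \<mu> x" if "x \<in> ?B r1 \<union> ?B r2 \<union> ?B r3 \<union> ?B r4" for x
    using that assms(5) block_subset[OF assms(2,4)] mem unfolding block_weighting_def by blast
  have points: "\<delta> x1 x2 + \<delta> x3 x4 \<le> \<delta> x1 x3 + \<delta> x2 x4 \<and> \<delta> x1 x4 + \<delta> x2 x3 \<le> \<delta> x1 x3 + \<delta> x2 x4"
    if "x1 \<in> ?B r1" "x2 \<in> ?B r2" "x3 \<in> ?B r3" "x4 \<in> ?B r4" for x1 x2 x3 x4
    using kalmanson_block_points[OF assms(3,4)] r that by blast
  have in_X: "x \<in> {1..n}" if "x \<in> ?B r1 \<union> ?B r2 \<union> ?B r3 \<union> ?B r4" for x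
    using that block_subset[OF assms(2,4)] mem by blast
  have sym: "\<delta> x y = \<delta> y x" if "x \<in> {1..n}" "y \<in> {1..n}" for x y
    using assms(1) that unfolding dissimilarity_def by blast
  show "?D r1 r2 + ?D r3 r4 \<le> ?D r1 r3 + ?D r2 r4"
    unfolding block_dissimilarity_def
    using points by (intro block_dist_four_point sums nonneg mem) auto
  have "?D r1 r4 + ?D r3 r2 \<le> ?D r1 r3 + ?D r4 r2"
    unfolding block_dissimilarity_def
  proof (intro block_dist_four_point sums nonneg mem)
    fix x y z w
    assume "x \<in> ?B r1" "y \<in> ?B r4" "z \<in> ?B r3" "w \<in> ?B r2"
    then show "\<delta> x y + \<delta> z w \<le> \<delta> x z + \<delta> y w"
      using points[of x w z y] sym in_X by (metis UnCI)
  qed auto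
  then show "?D r1 r4 + ?D r2 r3 \<le> ?D r1 r3 + ?D r2 r4"
    using block_dissimilarity_commute[OF assms(1,2,4)] mem by simp
qed

definition Q_form :: "nat \<Rightarrow> (nat \<Rightarrow> nat \<Rightarrow> real) \<Rightarrow> nat \<Rightarrow> nat \<Rightarrow> real" where
  "Q_form m G r s = (real m - 2) * G r s - (\<Sum>t\<in>{1..m} - {r}. G r t) - (\<Sum>t\<in>{1..m} - {s}. G s t)"

lemma Qdelta_eq_Q_form: "Qdelta m \<delta> \<mu> p a r s = Q_form m (block_dissimilarity \<delta> \<mu> p a) r s"
  by (simp add: Qdelta_def Q_form_def block_dissimilarity_def)

lemma Q_form_difference_eq:
  fixes G :: "nat \<Rightarrow> nat \<Rightarrow> real"
  assumes sym: "\<And>r s. r \<in> {1..m} \<Longrightarrow> s \<in> {1..m} \<Longrightarrow> G r s = G s r"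
    and i: "1 \<le> i" "i + 3 \<le> m"
  shows "Q_form m G i (i + 3) - Q_form m G (i + 1) (i + 2) =
    (\<Sum>t\<in>{1..m} - {i..i + 3}. G i (i + 3) - G (i + 1) (i + 2) + G (i + 1) t + G (i + 2) t - G i t - G (i + 3) t)"
proof -
  let ?T = "{1..m} - {i..i + 3}"
  have row: "(\<Sum>t\<in>{1..m} - {r}. G r t) = (\<Sum>t\<in>?T. G r t) + (\<Sum>t\<in>{i..i + 3}. G r t) - G r r"
    if "r \<in> {i..i + 3}" for r
    using that i sum.subset_diff[of "{i..i + 3}" "{1..m}" "G r"] by (simp add: sum_diff1)
  have block_of_four: "(\<Sum>t\<in>{i..i + 3}. g t) = g i + g (i + 1) + g (i + 2) + g (i + 3)"
    for g :: "nat \<Rightarrow> real"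
  proof -
    have "{i..i + 3} = {i, i + 1, i + 2, i + 3}" by auto
    then show ?thesis by simp
  qed
  have "card ?T = m - 4"
    using i by (subst card_Diff_subset) auto
  then have outer: "(\<Sum>t\<in>?T. G i (i + 3) - G (i + 1) (i + 2) + G (i + 1) t + G (i + 2) t - G i t - G (i + 3) t)
      = (real m - 4) * (G i (i + 3) - G (i + 1) (i + 2))
        + (\<Sum>t\<in>?T. G (i + 1) t) + (\<Sum>t\<in>?T. G (i + 2) t) - (\<Sum>t\<in>?T. G i t) - (\<Sum>t\<in>?T. G (i + 3) t)"
    using i by (simp add: sum.distrib sum_subtractf of_nat_diff)
  have G_sym: "G i (i + 1) = G (i + 1) i" "G i (i + 2) = G (i + 2) i" "G i (i + 3) = G (i + 3) i"
    "G (i + 1) (i + 2) = G (i + 2) (i + 1)" "G (i + 1) (i + 3) = G (i + 3) (i + 1)"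
    "G (i + 2) (i + 3) = G (i + 3) (i + 2)"
    using i by (auto intro!: sym)
  have mem: "i \<in> {i..i + 3}" "i + 1 \<in> {i..i + 3}" "i + 2 \<in> {i..i + 3}" "i + 3 \<in> {i..i + 3}"
    by auto
  show ?thesis
    unfolding Q_form_def outer row[OF mem(1)] row[OF mem(2)] row[OF mem(3)] row[OF mem(4)]
    using G_sym by (simp add: block_of_four algebra_simps)
qed

lemma kalmanson_outer_term_nonneg:
  fixes G :: "nat \<Rightarrow> nat \<Rightarrow> real"
  assumes kal: "kalmanson m G id"
    and sym: "\<And>r s. r \<in> {1..m} \<Longrightarrow> s \<in> {1..m} \<Longrightarrow> G r s = G s r"
    and i: "1 \<le> i" "i + 3 \<le> m" and t: "t \<in> {1..m} - {i..i + 3}"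
  shows "0 \<le> G i (i + 3) - G (i + 1) (i + 2) + G (i + 1) t + G (i + 2) t - G i t - G (i + 3) t"
proof -
  have K: "G r1 r2 + G r3 r4 \<le> G r1 r3 + G r2 r4 \<and> G r1 r4 + G r2 r3 \<le> G r1 r3 + G r2 r4"
    if "1 \<le> r1" "r1 < r2" "r2 < r3" "r3 < r4" "r4 \<le> m" for r1 r2 r3 r4
    using kal that unfolding kalmanson_def by simp
  consider "t < i" | "i + 3 < t"
    using t by force
  then show ?thesis
  proof cases
    case 1
    have "G t i + G (i + 1) (i + 3) \<le> G t (i + 1) + G i (i + 3)"
      "G t (i + 3) + G (i + 1) (i + 2) \<le> G t (i + 2) + G (i + 1) (i + 3)"
      using K[of t i "i + 1" "i + 3"] K[of t "i + 1" "i + 2" "i + 3"] 1 t i by auto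
    moreover have "G t i = G i t" "G t (i + 1) = G (i + 1) t" "G t (i + 2) = G (i + 2) t"
      "G t (i + 3) = G (i + 3) t"
      using t i by (auto intro: sym)
    ultimately show ?thesis by linarith
  next
    case 2
    have "G i t + G (i + 1) (i + 2) \<le> G i (i + 2) + G (i + 1) t"
      "G i (i + 2) + G (i + 3) t \<le> G i (i + 3) + G (i + 2) t"
      using K[of i "i + 1" "i + 2" t] K[of i "i + 2" "i + 3" t] 2 t i by auto
    then show ?thesis by linarith
  qed
qed

lemma kalmanson_Q_form_difference_nonneg:
  fixes G :: "nat \<Rightarrow> nat \<Rightarrow> real"
  assumes "kalmanson m G id"
    and sym: "\<And>r s. r \<in> {1..m} \<Longrightarrow> s \<in> {1..m} \<Longrightarrow> G r s = G s r"
    and i: "1 \<le> i" "i + 3 \<le> m"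
  shows "0 \<le> Q_form m G i (i + 3) - Q_form m G (i + 1) (i + 2)"
proof -
  have "0 \<le> (\<Sum>t\<in>{1..m} - {i..i + 3}.
      G i (i + 3) - G (i + 1) (i + 2) + G (i + 1) t + G (i + 2) t - G i t - G (i + 3) t)"
    by (intro sum_nonneg kalmanson_outer_term_nonneg[OF assms])
  then show ?thesis
    using Q_form_difference_eq[OF sym i] by simp
qed

theorem mainTheorem8:
  fixes n m :: nat and \<delta> :: "nat \<Rightarrow> nat \<Rightarrow> real" and p a :: "nat \<Rightarrow> nat"
    and \<mu> :: "nat \<Rightarrow> real" and i :: nat
  assumes "dissimilarity n \<delta>"
    and "circular_ordering n p"
    and "kalmanson n \<delta> p"
    and "m \<ge> 4"
    and "interval_partition n m a"
    and "block_weighting n m p a \<mu>"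
    and "1 \<le> i" and "i + 3 \<le> m"
  shows "Qdelta m \<delta> \<mu> p a i (i + 3) - Qdelta m \<delta> \<mu> p a (i + 1) (i + 2) \<ge> 0"
  unfolding Qdelta_eq_Q_form
proof (rule kalmanson_Q_form_difference_nonneg)
  show "kalmanson m (block_dissimilarity \<delta> \<mu> p a) id"
    using assms(1-3,5,6) by (rule kalmanson_block_dissimilarity)
  show "block_dissimilarity \<delta> \<mu> p a r s = block_dissimilarity \<delta> \<mu> p a s r"
    if "r \<in> {1..m}" "s \<in> {1..m}" for r s
    using assms(1,2,5) that by (rule block_dissimilarity_commute)
qed (use assms(7,8) in auto)

end
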